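(* Let $\mathcal{U}$ be a uniformity on a set $X$ and let $\widehat{\mathcal{U}}$ be its completion (a uniformity on the completion $\widehat{X}\supseteq X$). Then $\mathcal{U} =_T \widehat{\mathcal{U}}$, where both are ordered by reverse inclusion.
   Context: A directed set is a partially ordered set in which any two elements have a common upper bound. For directed sets $P,Q$, $P \ge_T Q$ means there is a map $\phi:P\to Q$ such that $\phi(C)$ is cofinal in $Q$ for every cofinal $C\subseteq P$; $P =_T Q$ means $P\ge_T Q$ and $Q \ge_T P$. *)

theory Defs
  imports Main
begin

definition uniformity_on :: "'a set \<Rightarrow> ('a \<times> 'a) set set \<Rightarrow> bool" where
  "uniformity_on X \<U> \<longleftrightarrow>
     \<U> \<noteq> {} \<and>
     (\<forall>U\<in>\<U>. Id_on X \<subseteq> U \<and> U \<subseteq> X \<times> X) \<and>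
     (\<forall>U\<in>\<U>. \<forall>V. U \<subseteq> V \<and> V \<subseteq> X \<times> X \<longrightarrow> V \<in> \<U>) \<and>
     (\<forall>U\<in>\<U>. \<forall>V\<in>\<U>. U \<inter> V \<in> \<U>) \<and>
     (\<forall>U\<in>\<U>. U\<inverse> \<in> \<U>) \<and>
     (\<forall>U\<in>\<U>. \<exists>V\<in>\<U>. V O V \<subseteq> U)"

definition cauchy_filter_on :: "'a set \<Rightarrow> ('a \<times> 'a) set set \<Rightarrow> 'a filter \<Rightarrow> bool" where
  "cauchy_filter_on Y \<U> F \<longleftrightarrow>
     F \<noteq> bot \<and> eventually (\<lambda>y. y \<in> Y) F \<and>
     (\<forall>U\<in>\<U>. \<exists>A. eventually (\<lambda>y. y \<in> A) F \<and> A \<times> A \<subseteq> U)"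

definition converges_to_unif :: "('a \<times> 'a) set set \<Rightarrow> 'a filter \<Rightarrow> 'a \<Rightarrow> bool" where
  "converges_to_unif \<U> F x \<longleftrightarrow> (\<forall>U\<in>\<U>. eventually (\<lambda>y. (x, y) \<in> U) F)"

definition complete_unif :: "'a set \<Rightarrow> ('a \<times> 'a) set set \<Rightarrow> bool" where
  "complete_unif Y \<U> \<longleftrightarrow>
     (\<forall>F. cauchy_filter_on Y \<U> F \<longrightarrow> (\<exists>x\<in>Y. converges_to_unif \<U> F x))"

definition uniform_completion ::
  "'a set \<Rightarrow> ('a \<times> 'a) set set \<Rightarrow> 'a set \<Rightarrow> ('a \<times> 'a) set set \<Rightarrow> bool" where
  "uniform_completion X \<U> Xh \<U>h \<longleftrightarrow>
     X \<subseteq> Xh \<and> uniformity_on Xh \<U>h \<and>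
     {V \<inter> (X \<times> X) | V. V \<in> \<U>h} = \<U> \<and>
     (\<forall>x\<in>Xh. \<forall>V\<in>\<U>h. \<exists>a\<in>X. (x, a) \<in> V) \<and>
     complete_unif Xh \<U>h"

definition cofinal_in :: "'p set \<Rightarrow> ('p \<Rightarrow> 'p \<Rightarrow> bool) \<Rightarrow> 'p set \<Rightarrow> bool" where
  "cofinal_in P le C \<longleftrightarrow> C \<subseteq> P \<and> (\<forall>p\<in>P. \<exists>c\<in>C. le p c)"

definition tukey_ge :: "'p set \<Rightarrow> ('p \<Rightarrow> 'p \<Rightarrow> bool) \<Rightarrow> 'q set \<Rightarrow> ('q \<Rightarrow> 'q \<Rightarrow> bool) \<Rightarrow> bool" where
  "tukey_ge P leP Q leQ \<longleftrightarrow>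
     (\<exists>\<phi>. \<phi> ` P \<subseteq> Q \<and> (\<forall>C. cofinal_in P leP C \<longrightarrow> cofinal_in Q leQ (\<phi> ` C)))"

definition tukey_equiv :: "'p set \<Rightarrow> ('p \<Rightarrow> 'p \<Rightarrow> bool) \<Rightarrow> 'q set \<Rightarrow> ('q \<Rightarrow> 'q \<Rightarrow> bool) \<Rightarrow> bool" where
  "tukey_equiv P leP Q leQ \<longleftrightarrow> tukey_ge P leP Q leQ \<and> tukey_ge Q leQ P leP"

end

theory Submission
  imports Defs
begin

text \<open>The trace map \<open>V \<mapsto> V \<inter> (X \<times> X)\<close> is a monotone surjection from the completed
  uniformity onto the original one, which gives one Tukey reduction. For the other, send an
  entourage \<open>U\<close> of \<open>X\<close> to its closure in \<open>Xh \<times> Xh\<close>. By density this closure is an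
  entourage of \<open>Xh\<close>, and the closure of a subset of \<open>V \<inter> (X \<times> X)\<close> lies in \<open>V O V O V\<close>;
  so small entourages of \<open>X\<close> are sent to small entourages of \<open>Xh\<close>.\<close>

lemma tukey_geI:
  assumes "\<phi> ` P \<subseteq> Q"
    and "\<And>q. q \<in> Q \<Longrightarrow> \<exists>p\<in>P. \<forall>p'\<in>P. leP p p' \<longrightarrow> leQ q (\<phi> p')"
  shows "tukey_ge P leP Q leQ"
  unfolding tukey_ge_def
proof (intro exI[of _ \<phi>] conjI allI impI)
  show "\<phi> ` P \<subseteq> Q" by (fact assms(1))
next
  fix C assume C: "cofinal_in P leP C"
  show "cofinal_in Q leQ (\<phi> ` C)"
    unfolding cofinal_in_def
  proof (intro conjI ballI)
    show "\<phi> ` C \<subseteq> Q" using C assms(1) unfolding cofinal_in_def by blast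
  next
    fix q assume "q \<in> Q"
    then obtain p where "p \<in> P" and p: "\<forall>p'\<in>P. leP p p' \<longrightarrow> leQ q (\<phi> p')"
      using assms(2) by blast
    then obtain c where "c \<in> C" "leP p c" using C unfolding cofinal_in_def by blast
    then show "\<exists>c'\<in>\<phi> ` C. leQ q c'" using p C unfolding cofinal_in_def by blast
  qed
qed

lemma tukey_ge_monotone_surj:
  assumes "\<phi> ` P = Q" and "\<And>p p'. p \<in> P \<Longrightarrow> p' \<in> P \<Longrightarrow> leP p p' \<Longrightarrow> leQ (\<phi> p) (\<phi> p')"
  shows "tukey_ge P leP Q leQ"
proof (rule tukey_geI)
  show "\<phi> ` P \<subseteq> Q" using assms(1) by simp
next
  fix q assume "q \<in> Q"
  then obtain p where "p \<in> P" "q = \<phi> p" using assms(1) by blast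
  then show "\<exists>p\<in>P. \<forall>p'\<in>P. leP p p' \<longrightarrow> leQ q (\<phi> p')" using assms(2) by blast
qed

lemma uniformity_on_subset: "uniformity_on Y \<V> \<Longrightarrow> U \<in> \<V> \<Longrightarrow> U \<subseteq> Y \<times> Y"
  unfolding uniformity_on_def by metis

lemma uniformity_on_superset:
  "uniformity_on Y \<V> \<Longrightarrow> U \<in> \<V> \<Longrightarrow> U \<subseteq> V \<Longrightarrow> V \<subseteq> Y \<times> Y \<Longrightarrow> V \<in> \<V>"
  unfolding uniformity_on_def by metis

lemma uniformity_on_Int: "uniformity_on Y \<V> \<Longrightarrow> U \<in> \<V> \<Longrightarrow> V \<in> \<V> \<Longrightarrow> U \<inter> V \<in> \<V>"
  unfolding uniformity_on_def by metis

lemma uniformity_on_converse: "uniformity_on Y \<V> \<Longrightarrow> U \<in> \<V> \<Longrightarrow> U\<inverse> \<in> \<V>"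
  unfolding uniformity_on_def by metis

lemma uniformity_on_half: "uniformity_on Y \<V> \<Longrightarrow> U \<in> \<V> \<Longrightarrow> \<exists>V\<in>\<V>. V O V \<subseteq> U"
  unfolding uniformity_on_def by metis

lemma uniformity_on_third:
  assumes "uniformity_on Y \<V>" "W \<in> \<V>"
  shows "\<exists>V\<in>\<V>. V O V O V \<subseteq> W"
proof -
  obtain V1 where V1: "V1 \<in> \<V>" "V1 O V1 \<subseteq> W" using uniformity_on_half[OF assms] by blast
  obtain V2 where V2: "V2 \<in> \<V>" "V2 O V2 \<subseteq> V1" using uniformity_on_half[OF assms(1) V1(1)] by blast
  have "V1 \<inter> V2 \<in> \<V>" using uniformity_on_Int[OF assms(1) V1(1) V2(1)] .
  moreover have "(V1 \<inter> V2) O (V1 \<inter> V2) O (V1 \<inter> V2) \<subseteq> W" using V1 V2 by blast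
  ultimately show ?thesis by blast
qed

definition entourage_closure :: "'a set \<Rightarrow> ('a \<times> 'a) set set \<Rightarrow> ('a \<times> 'a) set \<Rightarrow> ('a \<times> 'a) set"
  where "entourage_closure Y \<V> U =
    {(x, y) \<in> Y \<times> Y. \<forall>V\<in>\<V>. \<exists>a b. (x, a) \<in> V \<and> (a, b) \<in> U \<and> (b, y) \<in> V}"

lemma entourage_closure_subset_relcomp:
  "V \<in> \<V> \<Longrightarrow> entourage_closure Y \<V> U \<subseteq> V O U O V"
  unfolding entourage_closure_def by blast

lemma entourage_closure_in_uniformity:
  assumes unif: "uniformity_on Y \<V>"
    and dense: "\<forall>x\<in>Y. \<forall>V\<in>\<V>. \<exists>a\<in>X. (x, a) \<in> V"
    and "V0 \<in> \<V>" "V0 \<inter> (X \<times> X) \<subseteq> U"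
  shows "entourage_closure Y \<V> U \<in> \<V>"
proof -
  obtain V1 where V1: "V1 \<in> \<V>" "V1 O V1 O V1 \<subseteq> V0"
    using uniformity_on_third[OF unif \<open>V0 \<in> \<V>\<close>] by blast
  have "(x, y) \<in> entourage_closure Y \<V> U" if xy: "(x, y) \<in> V1" for x y
  proof -
    have "x \<in> Y" "y \<in> Y" using uniformity_on_subset[OF unif V1(1)] xy by auto
    moreover have "\<exists>a b. (x, a) \<in> V \<and> (a, b) \<in> U \<and> (b, y) \<in> V" if "V \<in> \<V>" for V
    proof -
      \<comment> \<open>approximate \<open>x\<close> and \<open>y\<close> by points of \<open>X\<close> that are also \<open>V1\<close>-close to them\<close>
      obtain a where a: "a \<in> X" "(x, a) \<in> V \<inter> V1\<inverse>"
        using dense \<open>x \<in> Y\<close> uniformity_on_Int[OF unif \<open>V \<in> \<V>\<close> uniformity_on_converse[OF unif V1(1)]]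
        by blast
      obtain b where b: "b \<in> X" "(y, b) \<in> V\<inverse> \<inter> V1"
        using dense \<open>y \<in> Y\<close> uniformity_on_Int[OF unif uniformity_on_converse[OF unif \<open>V \<in> \<V>\<close>] V1(1)]
        by blast
      have "(a, b) \<in> V1 O V1 O V1" using a b xy by blast
      then have "(a, b) \<in> U" using V1(2) a b assms(4) by blast
      then show ?thesis using a b by blast
    qed
    ultimately show ?thesis unfolding entourage_closure_def by blast
  qed
  then have "V1 \<subseteq> entourage_closure Y \<V> U" by auto
  moreover have "entourage_closure Y \<V> U \<subseteq> Y \<times> Y" unfolding entourage_closure_def by blast
  ultimately show ?thesis using uniformity_on_superset[OF unif V1(1)] by blast
qed

lemma tukey_ge_trace:
  "tukey_ge \<V> (\<lambda>A B. B \<subseteq> A) {V \<inter> (X \<times> X) | V. V \<in> \<V>} (\<lambda>A B. B \<subseteq> A)"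
proof (rule tukey_ge_monotone_surj)
  show "(\<lambda>V. V \<inter> (X \<times> X)) ` \<V> = {V \<inter> (X \<times> X) | V. V \<in> \<V>}" by blast
qed blast

lemma trace_tukey_ge_dense:
  assumes unif: "uniformity_on Y \<V>"
    and dense: "\<forall>x\<in>Y. \<forall>V\<in>\<V>. \<exists>a\<in>X. (x, a) \<in> V"
  shows "tukey_ge {V \<inter> (X \<times> X) | V. V \<in> \<V>} (\<lambda>A B. B \<subseteq> A) \<V> (\<lambda>A B. B \<subseteq> A)"
proof (rule tukey_geI[where \<phi> = "entourage_closure Y \<V>"])
  show "entourage_closure Y \<V> ` {V \<inter> (X \<times> X) | V. V \<in> \<V>} \<subseteq> \<V>"
    using entourage_closure_in_uniformity[OF unif dense] by blast
next
  fix W assume "W \<in> \<V>"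
  then obtain V where V: "V \<in> \<V>" "V O V O V \<subseteq> W" using uniformity_on_third[OF unif] by blast
  have "entourage_closure Y \<V> U \<subseteq> W" if "U \<subseteq> V \<inter> (X \<times> X)" for U
    using entourage_closure_subset_relcomp[OF V(1), of Y U] that V(2) by blast
  then show "\<exists>U\<in>{V \<inter> (X \<times> X) | V. V \<in> \<V>}. \<forall>U'\<in>{V \<inter> (X \<times> X) | V. V \<in> \<V>}.
      U' \<subseteq> U \<longrightarrow> entourage_closure Y \<V> U' \<subseteq> W"
    using V(1) by blast
qed

theorem mainTheorem2:
  fixes X Xh :: "'a set" and \<U> \<U>h :: "('a \<times> 'a) set set"
  assumes "uniformity_on X \<U>"
    and "uniform_completion X \<U> Xh \<U>h"
  shows "tukey_equiv \<U> (\<lambda>A B. B \<subseteq> A) \<U>h (\<lambda>A B. B \<subseteq> A)"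
proof -
  have unif: "uniformity_on Xh \<U>h"
    and trace: "{V \<inter> (X \<times> X) | V. V \<in> \<U>h} = \<U>"
    and dense: "\<forall>x\<in>Xh. \<forall>V\<in>\<U>h. \<exists>a\<in>X. (x, a) \<in> V"
    using assms(2) unfolding uniform_completion_def by auto
  show ?thesis
    unfolding tukey_equiv_def
    using tukey_ge_trace[of \<U>h X] trace_tukey_ge_dense[OF unif dense] by (simp add: trace)
qed

end
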